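(* Consider the system $\dot{x} = f(x) + F(x)\hat{\theta} + g(x)u + F(x)\tilde{\theta}$, obtained from $\dot x=f(x)+F(x)\theta+g(x)u$ ($x\in\mathbb{R}^n$, $u\in\mathbb{R}^m$, constant unknown $\theta\in\mathbb{R}^p$, $f,F,g$ locally Lipschitz, $f(0)=0$, $F(0)=0$) with estimate $\hat\theta\in\mathbb{R}^p$ and estimation error $\tilde\theta=\theta-\hat\theta$. Suppose the estimate evolves by an update law $\dot{\hat\theta}=\tau(\hat\theta,t)$, $\tau$ locally Lipschitz in its first argument and piecewise continuous in its second, and there exist $V_\theta:\mathbb{R}^p\times\mathbb{R}_{\ge0}\to\mathbb{R}_{\ge0}$, continuously differentiable in both arguments, and constants $\eta_1,\eta_2,\eta_3>0$, $T\ge0$ with $\eta_1\|\tilde\theta\|^2\le V_\theta(\tilde\theta,t)\le\eta_2\|\tilde\theta\|^2$ and $\dot V_\theta(\tilde\theta,t)\le0$ for all $(\tilde\theta,t)\in\mathbb{R}^p\times\mathbb{R}_{\ge0}$, and $\dot V_\theta(\tilde\theta,t)\le-\eta_3\|\tilde\theta\|^2$ for all $(\tilde\theta,t)\in\mathbb{R}^p\times\mathbb{R}_{\ge T}$ (derivatives along $\dot{\tilde\theta}=-\tau(\theta-\tilde\theta,t)$). Let $h:\mathbb{R}^n\to\mathbb{R}$ have relative degree $r\in\mathbb{N}$ with respect to both $u$ and $\tilde\theta$ (Assumption in the context), and let $h$ be an ISSf-HOCBF on $\mathcal{C}_\delta$ with functions $\alpha_1,\dots,\alpha_r\in\mathcal{K}_\infty^e$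 and constant $\varepsilon>0$ (defined in the context). Let $k:\mathbb{R}^n\times\mathbb{R}^p\to\mathbb{R}^m$ be locally Lipschitz with $k(x,\hat\theta)\in K_h(x,\hat\theta)$ for all $(x,\hat\theta)\in\mathbb{R}^n\times\mathbb{R}^p$, where $$K_h(x,\hat\theta)=\Big\{u\in\mathbb{R}^m : L_f\psi_{r-1}(x)+L_F\psi_{r-1}(x)\hat\theta+L_g\psi_{r-1}(x)u\ge -\alpha_r(\psi_{r-1}(x))+\tfrac{\|L_F\psi_{r-1}(x)\|^2}{\varepsilon}\Big\},$$ and let $\delta\ge0$ be such that $\|\tilde\theta\|_\infty\le\delta$. Define $$\gamma_r(\delta)=-\alpha_r^{-1}\!\left(-\tfrac{\varepsilon\delta^2}{4}\right),\qquad \gamma_i(\delta)=-\alpha_i^{-1}(-\gamma_{i+1}(\delta)),\ i\in\{1,\dots,r-1\},$$ and $\mathcal{C}_\delta=\bigcap_{i=1}^r\{x\in\mathbb{R}^n:\psi_{i-1}(x)+\gamma_i(\delta)\ge0\}$. Then the control policy $u=k(x,\hat\theta)$ renders $\mathcal{C}_\delta$ forward invariant for the closed-loop system $\dot x=f(x)+F(x)\hat\theta+g(x)k(x,\hat\theta)+F(x)\tilde\theta$.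
   Context: For a differentiable $h$ and vector field $f$, $L_fh(x)=\nabla h(x)f(x)$; $L_gh$, $L_Fh$ are defined column-wise. $\mathcal{K}_\infty^e$: continuous strictly increasing $\alpha:\mathbb{R}\to\mathbb{R}$ with $\alpha(0)=0$, $\alpha(r)\to\pm\infty$ as $r\to\pm\infty$ (hence invertible). $h$ has relative degree $r$ with respect to $u$ on a domain $\mathcal{D}$ if $h$ is $r$-times differentiable, $L_gL_f^ih(x)=0$ for all $x\in\mathbb{R}^n$ and $i\in\{0,\dots,r-2\}$, and $L_gL_f^{r-1}h(x)\ne0$ for $x\in\mathcal{D}$; relative degree with respect to $\tilde\theta$ is defined identically with $g$ replaced by $F$. Assumption: $h$ has relative degree $r$ with respect to both $u$ and $\tilde\theta$ (so $u$, $\hat\theta$, $\tilde\theta$ first appear in the $r$-th derivative of $h$). Given sufficiently smooth $\alpha_1,\dots,\alpha_r\in\mathcal{K}_\infty^e$, define $\psi_0(x)=h(x)$ and $\psi_i(x)=\dot\psi_{i-1}(x)+\alpha_i(\psi_{i-1}(x))=L_f\psi_{i-1}(x)+\alpha_i(\psi_{i-1}(x))$ for $i\in\{1,\dots,r-1\}$. Let $\mathcal{C}^i=\{x:\psi_{i-1}(x)\ge0\}$, $i=1,\dots,r$. $h$ is an input-to-state safe high order control barrier function (ISSf-HOCBF) on $\mathcal{C}_\delta$ if $\nabla\psi_{i-1}(x)\neq0$ for all $x\in\partial\mathcal{C}^i$ and all $i\in\{1,\dots,r\}$, and there exist such $\alpha_i$ and $\varepsilon>0$ with $\sup_{u\in\mathbb{R}^m}\big(L_f\psi_{r-1}(x)+L_F\psi_{r-1}(x)\hat\theta+L_g\psi_{r-1}(x)u\big)>-\alpha_r(\psi_{r-1}(x))+\tfrac{\|L_F\psi_{r-1}(x)\|^2}{\varepsilon}$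 for all $x\in\mathbb{R}^n$, $\hat\theta\in\mathbb{R}^p$. $\|\tilde\theta\|_\infty=\sup_{t\ge0}\|\tilde\theta(t)\|$. A set is forward invariant if every closed-loop solution starting in it remains in it on its whole maximal interval of existence. *)

theory Defs
  imports "HOL-Analysis.Analysis"
begin

definition Lie :: "('a::real_normed_vector \<Rightarrow> 'a) \<Rightarrow> ('a \<Rightarrow> real) \<Rightarrow> 'a \<Rightarrow> real" where
  "Lie v phi x = frechet_derivative phi (at x) (v x)"

definition LieV :: "(real^'n \<Rightarrow> real^'q^'n) \<Rightarrow> (real^'n \<Rightarrow> real) \<Rightarrow> real^'n \<Rightarrow> real^'q" where
  "LieV G phi x = (\<chi> j. frechet_derivative phi (at x) (column j (G x)))"

fun Lie_iter :: "('a::real_normed_vector \<Rightarrow> 'a) \<Rightarrow> ('a \<Rightarrow> real) \<Rightarrow> nat \<Rightarrow> 'a \<Rightarrow> real" where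
  "Lie_iter v h 0 = h"
| "Lie_iter v h (Suc i) = Lie v (Lie_iter v h i)"

text \<open>Relative degree r of h with respect to the input channel G on the domain D.
  (h r-times differentiable is read as: the iterated Lie derivatives L_f^i h, i < r,
  which enter L_G L_f^i h, are differentiable.)\<close>
definition rel_deg :: "(real^'n \<Rightarrow> real^'n) \<Rightarrow> (real^'n \<Rightarrow> real^'q^'n) \<Rightarrow> (real^'n \<Rightarrow> real)
    \<Rightarrow> nat \<Rightarrow> (real^'n) set \<Rightarrow> bool" where
  "rel_deg f G h r D \<longleftrightarrow> 1 \<le> r
     \<and> (\<forall>i<r. \<forall>x. Lie_iter f h i differentiable (at x))
     \<and> (\<forall>i. i + 2 \<le> r \<longrightarrow> (\<forall>x. LieV G (Lie_iter f h i) x = 0))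
     \<and> (\<forall>x\<in>D. LieV G (Lie_iter f h (r - 1)) x \<noteq> 0)"

definition Kinf_e :: "(real \<Rightarrow> real) \<Rightarrow> bool" where
  "Kinf_e \<alpha> \<longleftrightarrow> continuous_on UNIV \<alpha> \<and> strict_mono \<alpha> \<and> \<alpha> 0 = 0
     \<and> filterlim \<alpha> at_top at_top \<and> filterlim \<alpha> at_bot at_bot"

definition smooth_real :: "(real \<Rightarrow> real) \<Rightarrow> bool" where
  "smooth_real \<alpha> \<longleftrightarrow> (\<forall>k x. ((deriv ^^ k) \<alpha>) differentiable (at x))"

fun psi :: "(real^'n \<Rightarrow> real^'n) \<Rightarrow> (nat \<Rightarrow> real \<Rightarrow> real) \<Rightarrow> (real^'n \<Rightarrow> real) \<Rightarrow> nat \<Rightarrow> real^'n \<Rightarrow> real" where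
  "psi f \<alpha> h 0 = h"
| "psi f \<alpha> h (Suc i) = (\<lambda>x. Lie f (psi f \<alpha> h i) x + \<alpha> (Suc i) (psi f \<alpha> h i x))"

definition ISSf_HOCBF :: "(real^'n \<Rightarrow> real^'n) \<Rightarrow> (real^'n \<Rightarrow> real^'p^'n) \<Rightarrow> (real^'n \<Rightarrow> real^'m^'n)
    \<Rightarrow> (real^'n \<Rightarrow> real) \<Rightarrow> nat \<Rightarrow> (nat \<Rightarrow> real \<Rightarrow> real) \<Rightarrow> real \<Rightarrow> bool" where
  "ISSf_HOCBF f F g h r \<alpha> \<epsilon> \<longleftrightarrow>
     (\<forall>i\<in>{1..r}. Kinf_e (\<alpha> i)) \<and> \<epsilon> > 0
     \<and> (\<forall>i\<in>{1..r}. \<forall>x \<in> frontier {y. psi f \<alpha> h (i - 1) y \<ge> 0}.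
           frechet_derivative (psi f \<alpha> h (i - 1)) (at x) \<noteq> (\<lambda>_. 0))
     \<and> (\<forall>x (th::real^'p).
          (SUP u::real^'m. ereal (Lie f (psi f \<alpha> h (r - 1)) x
                 + LieV F (psi f \<alpha> h (r - 1)) x \<bullet> th + LieV g (psi f \<alpha> h (r - 1)) x \<bullet> u))
          > ereal (- \<alpha> r (psi f \<alpha> h (r - 1) x) + (norm (LieV F (psi f \<alpha> h (r - 1)) x))\<^sup>2 / \<epsilon>))"

definition K_h :: "(real^'n \<Rightarrow> real^'n) \<Rightarrow> (real^'n \<Rightarrow> real^'p^'n) \<Rightarrow> (real^'n \<Rightarrow> real^'m^'n)
    \<Rightarrow> (real^'n \<Rightarrow> real) \<Rightarrow> nat \<Rightarrow> (nat \<Rightarrow> real \<Rightarrow> real) \<Rightarrow> real \<Rightarrow> real^'n \<Rightarrow> real^'p \<Rightarrow> (real^'m) set" where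
  "K_h f F g h r \<alpha> \<epsilon> x th = {u.
      Lie f (psi f \<alpha> h (r - 1)) x + LieV F (psi f \<alpha> h (r - 1)) x \<bullet> th + LieV g (psi f \<alpha> h (r - 1)) x \<bullet> u
      \<ge> - \<alpha> r (psi f \<alpha> h (r - 1) x) + (norm (LieV F (psi f \<alpha> h (r - 1)) x))\<^sup>2 / \<epsilon>}"

text \<open>gamma_aux k = gamma_(r-k): gamma_r(delta) = -alpha_r^-1(-eps delta^2/4),
  gamma_i(delta) = -alpha_i^-1(-gamma_(i+1)(delta)).\<close>
fun gamma_aux :: "(nat \<Rightarrow> real \<Rightarrow> real) \<Rightarrow> real \<Rightarrow> nat \<Rightarrow> real \<Rightarrow> nat \<Rightarrow> real" where
  "gamma_aux \<alpha> \<epsilon> r \<delta> 0 = - inv (\<alpha> r) (- (\<epsilon> * \<delta>\<^sup>2 / 4))"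
| "gamma_aux \<alpha> \<epsilon> r \<delta> (Suc k) = - inv (\<alpha> (r - Suc k)) (- gamma_aux \<alpha> \<epsilon> r \<delta> k)"

definition gamma :: "(nat \<Rightarrow> real \<Rightarrow> real) \<Rightarrow> real \<Rightarrow> nat \<Rightarrow> real \<Rightarrow> nat \<Rightarrow> real" where
  "gamma \<alpha> \<epsilon> r \<delta> i = gamma_aux \<alpha> \<epsilon> r \<delta> (r - i)"

definition C_delta :: "(real^'n \<Rightarrow> real^'n) \<Rightarrow> (nat \<Rightarrow> real \<Rightarrow> real) \<Rightarrow> (real^'n \<Rightarrow> real)
    \<Rightarrow> real \<Rightarrow> nat \<Rightarrow> real \<Rightarrow> (real^'n) set" where
  "C_delta f \<alpha> h \<epsilon> r \<delta> = (\<Inter>i\<in>{1..r}. {x. psi f \<alpha> h (i - 1) x + gamma \<alpha> \<epsilon> r \<delta> i \<ge> 0})"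

definition loc_lip :: "('a::metric_space \<Rightarrow> 'b::metric_space) \<Rightarrow> bool" where
  "loc_lip \<phi> \<longleftrightarrow> (\<forall>x. \<exists>u>0. \<exists>L. L-lipschitz_on (cball x u) \<phi>)"

definition pw_continuous :: "(real \<Rightarrow> 'a::topological_space) \<Rightarrow> bool" where
  "pw_continuous \<phi> \<longleftrightarrow> (\<forall>a b. 0 \<le> a \<longrightarrow> a \<le> b \<longrightarrow> (\<exists>S. finite S \<and> continuous_on ({a..b} - S) \<phi>
      \<and> (\<forall>s\<in>S. (\<exists>l. (\<phi> \<longlongrightarrow> l) (at_left s)) \<and> (\<exists>l. (\<phi> \<longlongrightarrow> l) (at_right s)))))"

end

theory Submission
  imports Defs
begin

text \<open>
  Write \<open>b\<^sub>i(t) = \<psi>\<^sub>i(x(t))\<close> and \<open>c\<^sub>i = \<gamma>\<^sub>i(\<delta>)\<close>. Because \<open>u\<close> and \<open>\<theta>\<close> first appear in the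
  \<open>r\<close>-th derivative of \<open>h\<close>, every \<open>\<psi>\<^sub>i\<close> with \<open>i < r - 1\<close> is a smooth expression in
  \<open>h, L\<^sub>fh, \<dots>, L\<^sub>f\<^sup>ih\<close>, so \<open>L\<^sub>g\<psi>\<^sub>i = L\<^sub>F\<psi>\<^sub>i = 0\<close> and along the closed loop
  \<open>b\<^sub>i' = b\<^sub>i\<^sub>+\<^sub>1 - \<alpha>\<^sub>i\<^sub>+\<^sub>1(b\<^sub>i)\<close>. At the top level the choice \<open>k \<in> K\<^sub>h\<close> gives
  \<open>b\<^sub>r\<^sub>-\<^sub>1' \<ge> -\<alpha>\<^sub>r(b\<^sub>r\<^sub>-\<^sub>1) + \<parallel>L\<^sub>F\<psi>\<parallel>\<^sup>2/\<epsilon> - \<parallel>L\<^sub>F\<psi>\<parallel>\<delta> \<ge> -\<alpha>\<^sub>r(b\<^sub>r\<^sub>-\<^sub>1) + \<alpha>\<^sub>r(-c\<^sub>r)\<close>,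
  and a comparison argument keeps \<open>b\<^sub>r\<^sub>-\<^sub>1 \<ge> -c\<^sub>r\<close>. Since \<open>\<alpha>\<^sub>i(-c\<^sub>i) = -c\<^sub>i\<^sub>+\<^sub>1\<close>, the same
  comparison then propagates the bounds \<open>b\<^sub>i \<ge> -c\<^sub>i\<^sub>+\<^sub>1\<close> down the cascade.
\<close>

inductive_set Lie_generated :: "('a::real_normed_vector \<Rightarrow> 'a) \<Rightarrow> ('a \<Rightarrow> real) \<Rightarrow> nat \<Rightarrow> ('a \<Rightarrow> real) set"
  for f :: "'a \<Rightarrow> 'a" and h :: "'a \<Rightarrow> real" and i :: nat where
  gen_Lie_iter: "j \<le> i \<Longrightarrow> Lie_iter f h j \<in> Lie_generated f h i"
| gen_const: "(\<lambda>_. c) \<in> Lie_generated f h i"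
| gen_add: "\<phi> \<in> Lie_generated f h i \<Longrightarrow> \<psi> \<in> Lie_generated f h i \<Longrightarrow> (\<lambda>x. \<phi> x + \<psi> x) \<in> Lie_generated f h i"
| gen_mult: "\<phi> \<in> Lie_generated f h i \<Longrightarrow> \<psi> \<in> Lie_generated f h i \<Longrightarrow> (\<lambda>x. \<phi> x * \<psi> x) \<in> Lie_generated f h i"
| gen_comp: "smooth_real \<beta> \<Longrightarrow> \<phi> \<in> Lie_generated f h i \<Longrightarrow> (\<lambda>x. \<beta> (\<phi> x)) \<in> Lie_generated f h i"

lemma Lie_generated_mono: "\<phi> \<in> Lie_generated f h i \<Longrightarrow> i \<le> i' \<Longrightarrow> \<phi> \<in> Lie_generated f h i'"
  by (induction rule: Lie_generated.induct) (auto intro: Lie_generated.intros)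

lemma smooth_real_deriv: "smooth_real \<beta> \<Longrightarrow> smooth_real (deriv \<beta>)"
  unfolding smooth_real_def by (metis funpow_Suc_right comp_apply)

lemma smooth_real_has_derivative:
  "smooth_real \<beta> \<Longrightarrow> (\<beta> has_derivative (\<lambda>s. deriv \<beta> y * s)) (at y)"
  unfolding smooth_real_def has_field_derivative_def[symmetric]
  by (metis DERIV_deriv_iff_real_differentiable funpow_0)

lemma Lie_eq_derivative: "(\<phi> has_derivative D) (at x) \<Longrightarrow> Lie v \<phi> x = D (v x)"
  by (simp add: Lie_def frechet_derivative_at[symmetric])

lemma Lie_generated_has_derivative:
  assumes "\<phi> \<in> Lie_generated f h i" and "\<And>j y. j \<le> i \<Longrightarrow> Lie_iter f h j differentiable (at y)"
  shows "\<exists>D. (\<phi> has_derivative D) (at x) \<and>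
    (\<forall>v. (\<forall>j\<le>i. frechet_derivative (Lie_iter f h j) (at x) v = 0) \<longrightarrow> D v = 0)"
  using assms(1)
proof induction
  case (gen_Lie_iter j)
  then show ?case
    using assms(2) frechet_derivative_works by blast
next
  case (gen_const c)
  show ?case by (intro exI[of _ "\<lambda>_. 0"]) auto
next
  case (gen_add \<phi> \<psi>)
  then obtain D1 D2 where "(\<phi> has_derivative D1) (at x)" "(\<psi> has_derivative D2) (at x)"
    "\<forall>v. (\<forall>j\<le>i. frechet_derivative (Lie_iter f h j) (at x) v = 0) \<longrightarrow> D1 v = 0 \<and> D2 v = 0"
    by blast
  then show ?case by (intro exI[of _ "\<lambda>v. D1 v + D2 v"]) (auto intro: has_derivative_add)
next
  case (gen_mult \<phi> \<psi>)
  then obtain D1 D2 where "(\<phi> has_derivative D1) (at x)" "(\<psi> has_derivative D2) (at x)"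
    "\<forall>v. (\<forall>j\<le>i. frechet_derivative (Lie_iter f h j) (at x) v = 0) \<longrightarrow> D1 v = 0 \<and> D2 v = 0"
    by blast
  then show ?case
    by (intro exI[of _ "\<lambda>v. \<phi> x * D2 v + D1 v * \<psi> x"]) (auto intro: has_derivative_mult)
next
  case (gen_comp \<beta> \<phi>)
  then obtain D where "(\<phi> has_derivative D) (at x)"
    "\<forall>v. (\<forall>j\<le>i. frechet_derivative (Lie_iter f h j) (at x) v = 0) \<longrightarrow> D v = 0"
    by blast
  with smooth_real_has_derivative[OF gen_comp(1)] show ?case
    by (intro exI[of _ "\<lambda>v. deriv \<beta> (\<phi> x) * D v"]) (auto intro: has_derivative_compose)
qed

lemma Lie_generated_has_frechet_derivative:
  assumes "\<phi> \<in> Lie_generated f h i" and "\<And>j y. j \<le> i \<Longrightarrow> Lie_iter f h j differentiable (at y)"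
  shows "(\<phi> has_derivative frechet_derivative \<phi> (at x)) (at x)"
  using Lie_generated_has_derivative[OF assms, of x] frechet_derivative_works differentiableI by blast

lemma frechet_derivative_Lie_generated_eq_0:
  assumes "\<phi> \<in> Lie_generated f h i" and "\<And>j y. j \<le> i \<Longrightarrow> Lie_iter f h j differentiable (at y)"
    and "\<And>j. j \<le> i \<Longrightarrow> frechet_derivative (Lie_iter f h j) (at x) v = 0"
  shows "frechet_derivative \<phi> (at x) v = 0"
  using Lie_generated_has_derivative[OF assms(1,2), of x] assms(3) frechet_derivative_at by metis

lemma Lie_Lie_generated:
  assumes "\<phi> \<in> Lie_generated f h i" and diff: "\<And>j y. j \<le> i \<Longrightarrow> Lie_iter f h j differentiable (at y)"
  shows "Lie f \<phi> \<in> Lie_generated f h (Suc i)"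
  using assms(1)
proof induction
  case (gen_Lie_iter j)
  then have "Lie_iter f h (Suc j) \<in> Lie_generated f h (Suc i)"
    by (intro Lie_generated.gen_Lie_iter) simp
  then show ?case by simp
next
  case (gen_const c)
  have "Lie f (\<lambda>_. c) = (\<lambda>_. 0)"
    using Lie_eq_derivative[OF has_derivative_const] by (intro ext)
  then show ?case by (simp only: Lie_generated.gen_const)
next
  case (gen_add \<phi> \<psi>)
  have "Lie f (\<lambda>x. \<phi> x + \<psi> x) = (\<lambda>x. Lie f \<phi> x + Lie f \<psi> x)"
  proof
    fix x
    show "Lie f (\<lambda>x. \<phi> x + \<psi> x) x = Lie f \<phi> x + Lie f \<psi> x"
      using Lie_eq_derivative[OF has_derivative_add[OF
            Lie_generated_has_frechet_derivative[OF gen_add.hyps(1) diff]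
            Lie_generated_has_frechet_derivative[OF gen_add.hyps(2) diff]]]
      by (simp add: Lie_def)
  qed
  then show ?case by (simp only: Lie_generated.gen_add gen_add.IH)
next
  case (gen_mult \<phi> \<psi>)
  have "Lie f (\<lambda>x. \<phi> x * \<psi> x) = (\<lambda>x. \<phi> x * Lie f \<psi> x + Lie f \<phi> x * \<psi> x)"
  proof
    fix x
    show "Lie f (\<lambda>x. \<phi> x * \<psi> x) x = \<phi> x * Lie f \<psi> x + Lie f \<phi> x * \<psi> x"
      using Lie_eq_derivative[OF has_derivative_mult[OF
            Lie_generated_has_frechet_derivative[OF gen_mult.hyps(1) diff]
            Lie_generated_has_frechet_derivative[OF gen_mult.hyps(2) diff]]]
      by (simp add: Lie_def)
  qed
  moreover have "\<phi> \<in> Lie_generated f h (Suc i)" "\<psi> \<in> Lie_generated f h (Suc i)"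
    using Lie_generated_mono[OF gen_mult.hyps(1)] Lie_generated_mono[OF gen_mult.hyps(2)] by simp_all
  ultimately show ?case
    by (simp only: Lie_generated.gen_add Lie_generated.gen_mult gen_mult.IH)
next
  case (gen_comp \<beta> \<phi>)
  have "Lie f (\<lambda>x. \<beta> (\<phi> x)) = (\<lambda>x. deriv \<beta> (\<phi> x) * Lie f \<phi> x)"
  proof
    fix x
    show "Lie f (\<lambda>x. \<beta> (\<phi> x)) x = deriv \<beta> (\<phi> x) * Lie f \<phi> x"
      using Lie_eq_derivative[OF has_derivative_compose[OF
            Lie_generated_has_frechet_derivative[OF gen_comp.hyps(2) diff]
            smooth_real_has_derivative[OF gen_comp.hyps(1)]]]
      by (simp add: Lie_def)
  qed
  moreover have "(\<lambda>x. deriv \<beta> (\<phi> x)) \<in> Lie_generated f h (Suc i)"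
    using smooth_real_deriv[OF gen_comp.hyps(1)] Lie_generated_mono[OF gen_comp.hyps(2)]
    by (simp add: Lie_generated.gen_comp)
  ultimately show ?case by (simp only: Lie_generated.gen_mult gen_comp.IH)
qed

lemma psi_Lie_generated:
  assumes "\<And>j y. j < i \<Longrightarrow> Lie_iter f h j differentiable (at y)"
    and "\<And>j. j \<in> {1..i} \<Longrightarrow> smooth_real (\<alpha> j)"
  shows "psi f \<alpha> h i \<in> Lie_generated f h i"
  using assms
proof (induction i)
  case 0
  show ?case using gen_Lie_iter[where j = 0] by simp
next
  case (Suc i)
  then have IH: "psi f \<alpha> h i \<in> Lie_generated f h i" by simp
  have "Lie f (psi f \<alpha> h i) \<in> Lie_generated f h (Suc i)"
    using Suc.prems(1) by (intro Lie_Lie_generated[OF IH]) simp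
  moreover have "(\<lambda>x. \<alpha> (Suc i) (psi f \<alpha> h i x)) \<in> Lie_generated f h (Suc i)"
    using Suc.prems(2) Lie_generated_mono[OF IH] by (simp add: gen_comp)
  ultimately show ?case by (simp add: gen_add)
qed

lemma LieV_eq_derivative:
  "(\<phi> has_derivative D) (at y) \<Longrightarrow> LieV G \<phi> y = (\<chi> j. D (column j (G y)))"
  by (simp add: LieV_def frechet_derivative_at[symmetric])

lemma LieV_psi_eq_0:
  assumes rel_deg: "rel_deg f G h r D"
    and smooth: "\<And>j. j \<in> {1..r} \<Longrightarrow> smooth_real (\<alpha> j)"
    and i: "i + 2 \<le> r"
  shows "LieV G (psi f \<alpha> h i) y = 0"
proof -
  have diff: "\<And>j y. j \<le> i \<Longrightarrow> Lie_iter f h j differentiable (at y)"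
    and LieV_iter: "\<And>j. j \<le> i \<Longrightarrow> LieV G (Lie_iter f h j) y = 0"
    using rel_deg i by (auto simp: rel_deg_def)
  have "psi f \<alpha> h i \<in> Lie_generated f h i"
    using diff smooth i by (intro psi_Lie_generated) auto
  then have "frechet_derivative (psi f \<alpha> h i) (at y) (column l (G y)) = 0" for l
    using diff
  proof (rule frechet_derivative_Lie_generated_eq_0)
    show "frechet_derivative (Lie_iter f h j) (at y) (column l (G y)) = 0" if "j \<le> i" for j
      using LieV_iter[OF that] by (simp add: LieV_def vec_eq_iff)
  qed
  then show ?thesis by (simp add: LieV_def vec_eq_iff)
qed

lemma linear_mult_vec_eq_inner_columns:
  fixes D :: "real^'n \<Rightarrow> real" and M :: "real^'q^'n"
  assumes "linear D"
  shows "D (M *v w) = (\<chi> j. D (column j M)) \<bullet> w"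
proof -
  have "D (M *v w) = (\<Sum>j\<in>UNIV. w $ j * D (column j M))"
    by (simp add: matrix_mult_sum scalar_mult_eq_scaleR linear_sum[OF assms] linear_scale[OF assms])
  also have "\<dots> = (\<chi> j. D (column j M)) \<bullet> w"
    by (simp add: inner_vec_def mult.commute)
  finally show ?thesis .
qed

lemma has_real_derivative_along_closed_loop:
  fixes x :: "real \<Rightarrow> real^'n" and \<phi> :: "real^'n \<Rightarrow> real"
  assumes "(x has_vector_derivative f (x t) + F (x t) *v a + g (x t) *v u + F (x t) *v b) (at t within J)"
    and "\<phi> differentiable (at (x t))"
  shows "((\<lambda>s. \<phi> (x s)) has_real_derivative
      Lie f \<phi> (x t) + LieV F \<phi> (x t) \<bullet> a + LieV g \<phi> (x t) \<bullet> u + LieV F \<phi> (x t) \<bullet> b) (at t within J)"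
proof -
  let ?D = "frechet_derivative \<phi> (at (x t))"
  have D: "(\<phi> has_derivative ?D) (at (x t))"
    using assms(2) frechet_derivative_works by blast
  have "(\<phi> \<circ> x has_vector_derivative ?D (f (x t) + F (x t) *v a + g (x t) *v u + F (x t) *v b))
      (at t within J)"
    by (rule vector_derivative_diff_chain_within[OF assms(1) has_derivative_at_withinI[OF D]])
  moreover have "?D (f (x t) + F (x t) *v a + g (x t) *v u + F (x t) *v b)
      = Lie f \<phi> (x t) + LieV F \<phi> (x t) \<bullet> a + LieV g \<phi> (x t) \<bullet> u + LieV F \<phi> (x t) \<bullet> b"
    using has_derivative_linear[OF D]
    by (simp add: linear_add linear_mult_vec_eq_inner_columns Lie_eq_derivative[OF D] LieV_eq_derivative[OF D])
  ultimately show ?thesis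
    by (simp add: has_real_derivative_iff_has_vector_derivative comp_def)
qed

text \<open>The margin \<open>\<parallel>L\<^sub>F\<psi>\<parallel>\<^sup>2/\<epsilon>\<close> built into \<^const>\<open>K_h\<close> absorbs the unknown term \<open>L\<^sub>F\<psi> \<theta>\<^sup>~\<close>
  up to \<open>\<epsilon>\<delta>\<^sup>2/4\<close>, by completing the square.\<close>
lemma K_h_robust:
  assumes "u \<in> K_h f F g h r \<alpha> \<epsilon> y a" and "\<epsilon> > 0" and "norm b \<le> \<delta>"
  defines "\<psi> \<equiv> psi f \<alpha> h (r - 1)"
  shows "Lie f \<psi> y + LieV F \<psi> y \<bullet> a + LieV g \<psi> y \<bullet> u + LieV F \<psi> y \<bullet> b + \<alpha> r (\<psi> y)
    \<ge> - (\<epsilon> * \<delta>\<^sup>2 / 4)"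
proof -
  let ?n = "norm (LieV F \<psi> y)"
  have "0 \<le> (?n - \<epsilon> * \<delta> / 2)\<^sup>2 / \<epsilon>" using assms(2) by simp
  also have "\<dots> = ?n\<^sup>2 / \<epsilon> - ?n * \<delta> + \<epsilon> * \<delta>\<^sup>2 / 4"
    using assms(2) by (simp add: power2_eq_square field_simps)
  finally have square: "?n\<^sup>2 / \<epsilon> - ?n * \<delta> \<ge> - (\<epsilon> * \<delta>\<^sup>2 / 4)" by simp
  have "\<bar>LieV F \<psi> y \<bullet> b\<bar> \<le> ?n * norm b" by (rule Cauchy_Schwarz_ineq2)
  also have "\<dots> \<le> ?n * \<delta>" using assms(3) by (simp add: mult_left_mono)
  finally have "LieV F \<psi> y \<bullet> b \<ge> - (?n * \<delta>)" by linarith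
  moreover have "Lie f \<psi> y + LieV F \<psi> y \<bullet> a + LieV g \<psi> y \<bullet> u \<ge> - \<alpha> r (\<psi> y) + ?n\<^sup>2 / \<epsilon>"
    using assms(1) unfolding K_h_def \<psi>_def by simp
  ultimately show ?thesis using square by linarith
qed

lemma Kinf_e_surj:
  assumes "Kinf_e a" shows "surj a"
proof -
  have cont: "continuous_on UNIV a" and top: "filterlim a at_top at_top"
    and bot: "filterlim a at_bot at_bot"
    using assms unfolding Kinf_e_def by auto
  have "\<exists>z. a z = y" for y
  proof -
    obtain b where b: "a b \<ge> y"
      using top by (metis filterlim_at_top eventually_at_top_linorder order_refl)
    obtain c where c: "\<forall>x\<le>c. a x \<le> y"
      using bot by (metis filterlim_at_bot eventually_at_bot_linorder)
    have "a (min c b) \<le> y" "min c b \<le> b" using c by auto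
    then show ?thesis
      using IVT'[of a "min c b" y b] b continuous_on_subset[OF cont] by blast
  qed
  then show ?thesis by (metis surj_def)
qed

lemma Kinf_e_inv: "Kinf_e a \<Longrightarrow> a (inv a y) = y"
  by (simp add: Kinf_e_surj surj_f_inv_f)

lemma alpha_neg_gamma_top:
  "Kinf_e (\<alpha> r) \<Longrightarrow> \<alpha> r (- gamma \<alpha> \<epsilon> r \<delta> r) = - (\<epsilon> * \<delta>\<^sup>2 / 4)"
  by (simp add: gamma_def Kinf_e_inv)

lemma alpha_neg_gamma:
  assumes "Kinf_e (\<alpha> i)" and "i < r"
  shows "\<alpha> i (- gamma \<alpha> \<epsilon> r \<delta> i) = - gamma \<alpha> \<epsilon> r \<delta> (Suc i)"
proof -
  have "r - i = Suc (r - Suc i)" and "r - Suc (r - Suc i) = i" using assms(2) by auto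
  then have "gamma \<alpha> \<epsilon> r \<delta> i = - inv (\<alpha> i) (- gamma \<alpha> \<epsilon> r \<delta> (Suc i))"
    unfolding gamma_def by simp
  then show ?thesis using assms(1) by (simp add: Kinf_e_inv)
qed

lemma nonneg_if_deriv_nonneg_where_neg:
  fixes y y' :: "real \<Rightarrow> real"
  assumes J: "is_interval J" "t0 \<in> J" "J \<subseteq> {t0..}"
    and deriv: "\<And>t. t \<in> J \<Longrightarrow> (y has_real_derivative y' t) (at t within J)"
    and init: "y t0 \<ge> 0" and nonneg_where_neg: "\<And>t. t \<in> J \<Longrightarrow> y t < 0 \<Longrightarrow> y' t \<ge> 0"
    and t1: "t1 \<in> J"
  shows "y t1 \<ge> 0"
proof (rule ccontr)
  assume neg_t1: "\<not> y t1 \<ge> 0"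
  have "s \<in> J" if "t0 \<le> s" "s \<le> t1" for s
    using J(1,2) t1 that unfolding is_interval_1 by blast
  then have sub: "{t0..t1} \<subseteq> J" by auto
  have "continuous_on J y"
    using deriv DERIV_continuous continuous_on_eq_continuous_within by blast
  then have cont: "continuous_on {t0..t1} y"
    using sub continuous_on_subset by blast
  define S where "S = {t0..t1} \<inter> y -` {0..}"
  have "closed S" unfolding S_def by (rule continuous_closed_preimage[OF cont]) auto
  moreover have "bounded S" unfolding S_def by (rule bounded_subset[of "{t0..t1}"]) auto
  ultimately have "compact S" by (simp add: compact_eq_bounded_closed)
  moreover have "t0 \<in> S" using init J(3) t1 unfolding S_def by auto
  ultimately obtain s0 where s0: "s0 \<in> S" "\<forall>s\<in>S. s \<le> s0"
    using compact_attains_sup by blast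
  txt \<open>\<open>s0\<close> is the last time in \<open>[t0, t1]\<close> at which \<open>y \<ge> 0\<close>; on \<open>(s0, t1)\<close> \<open>y\<close> is negative,
    hence nondecreasing, so \<open>y t1 \<ge> y s0 \<ge> 0\<close>.\<close>
  have s0_le: "t0 \<le> s0" "s0 \<le> t1" "y s0 \<ge> 0" using s0(1) unfolding S_def by auto
  have "y s0 \<le> y t1"
  proof (rule DERIV_nonneg_imp_increasing_open[OF s0_le(2)])
    show "continuous_on {s0..t1} y" using cont continuous_on_subset s0_le by fastforce
    fix s assume s: "s0 < s" "s < t1"
    have "s \<in> S" if "y s \<ge> 0" using that s s0_le unfolding S_def by auto
    then have "y s < 0" using s0(2) s by force
    have "{s0<..<t1} \<subseteq> interior J"
      using sub s0_le by (intro interior_maximal) auto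
    then have "s \<in> interior J" using s by auto
    then have "(y has_real_derivative y' s) (at s)" and "s \<in> J"
      using deriv[of s] at_within_interior[of s J] interior_subset by auto
    moreover have "y' s \<ge> 0"
      using nonneg_where_neg[OF \<open>s \<in> J\<close> \<open>y s < 0\<close>] .
    ultimately show "\<exists>z. (y has_real_derivative z) (at s) \<and> 0 \<le> z" by blast
  qed
  then show False using s0_le neg_t1 by linarith
qed

lemma ge_if_deriv_ge_class_K:
  fixes y y' a :: "real \<Rightarrow> real"
  assumes J: "is_interval J" "t0 \<in> J" "J \<subseteq> {t0..}"
    and deriv: "\<And>t. t \<in> J \<Longrightarrow> (y has_real_derivative y' t) (at t within J)"
    and "mono a" and bound: "\<And>t. t \<in> J \<Longrightarrow> y' t + a (y t) \<ge> a c"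
    and init: "y t0 \<ge> c" and t1: "t1 \<in> J"
  shows "y t1 \<ge> c"
proof -
  have "(\<lambda>t. y t - c) t1 \<ge> 0"
  proof (rule nonneg_if_deriv_nonneg_where_neg[OF J _ _ _ t1])
    show "((\<lambda>t. y t - c) has_real_derivative y' t) (at t within J)" if "t \<in> J" for t
      using DERIV_diff[OF deriv[OF that] DERIV_const] by simp
    show "y' t \<ge> 0" if "t \<in> J" "y t - c < 0" for t
      using monoD[OF \<open>mono a\<close>, of "y t" c] bound[OF that(1)] that(2) by linarith
  qed (use init in simp)
  then show ?thesis by simp
qed

text \<open>The comparison argument of a high order barrier function: \<open>b\<^sub>i\<close> plays \<open>\<psi>\<^sub>i\<close> along a
  trajectory, \<open>a\<^sub>i\<close> plays \<open>\<alpha>\<^sub>i\<^sub>+\<^sub>1\<close> and \<open>c\<^sub>i\<close> plays \<open>\<gamma>\<^sub>i\<^sub>+\<^sub>1\<close>.\<close>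
lemma HOCBF_cascade_ge:
  fixes b b' a :: "nat \<Rightarrow> real \<Rightarrow> real" and c :: "nat \<Rightarrow> real"
  assumes J: "is_interval J" "t0 \<in> J" "J \<subseteq> {t0..}"
    and mono: "\<And>i. i < r \<Longrightarrow> mono (a i)"
    and deriv: "\<And>i t. i < r \<Longrightarrow> t \<in> J \<Longrightarrow> (b i has_real_derivative b' i t) (at t within J)"
    and cascade: "\<And>i t. Suc i < r \<Longrightarrow> t \<in> J \<Longrightarrow> b' i t + a i (b i t) = b (Suc i) t"
    and link: "\<And>i. Suc i < r \<Longrightarrow> a i (- c i) = - c (Suc i)"
    and top: "\<And>t. t \<in> J \<Longrightarrow> b' (r - 1) t + a (r - 1) (b (r - 1) t) \<ge> a (r - 1) (- c (r - 1))"
    and init: "\<And>i. i < r \<Longrightarrow> b i t0 \<ge> - c i"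
    and "i < r" and "t \<in> J"
  shows "b i t \<ge> - c i"
proof -
  have "i \<le> r - 1" using \<open>i < r\<close> by simp
  then have "\<forall>t\<in>J. b i t \<ge> - c i"
  proof (induction rule: inc_induct)
    case base
    from \<open>i < r\<close> have top_index: "r - 1 < r" by simp
    show ?case
      using ge_if_deriv_ge_class_K[OF J deriv[OF top_index] mono[OF top_index] top init[OF top_index]]
      by blast
  next
    case (step n)
    then have "Suc n < r" by simp
    show ?case
    proof
      fix t assume "t \<in> J"
      show "b n t \<ge> - c n"
      proof (rule ge_if_deriv_ge_class_K[OF J deriv mono _ init \<open>t \<in> J\<close>])
        show "b' n s + a n (b n s) \<ge> a n (- c n)" if "s \<in> J" for s
          using cascade[OF \<open>Suc n < r\<close> that] link[OF \<open>Suc n < r\<close>] step.IH that by simp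
      qed (use \<open>Suc n < r\<close> in simp_all)
    qed
  qed
  then show ?thesis using \<open>t \<in> J\<close> by blast
qed

theorem theorem2:
  fixes f :: "real^'n \<Rightarrow> real^'n" and F :: "real^'n \<Rightarrow> real^'p^'n" and g :: "real^'n \<Rightarrow> real^'m^'n"
    and \<theta> :: "real^'p"
    and \<tau> :: "real^'p \<Rightarrow> real \<Rightarrow> real^'p"
    and V :: "real^'p \<Rightarrow> real \<Rightarrow> real"
    and DV :: "(real^'p) \<times> real \<Rightarrow> ((real^'p) \<times> real) \<Rightarrow>\<^sub>L real"
    and \<eta>1 \<eta>2 \<eta>3 T :: real
    and h :: "real^'n \<Rightarrow> real" and r :: nat and D :: "(real^'n) set"
    and \<alpha> :: "nat \<Rightarrow> real \<Rightarrow> real" and \<epsilon> :: real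
    and k :: "real^'n \<Rightarrow> real^'p \<Rightarrow> real^'m"
    and \<delta> :: real
    and \<theta>h :: "real \<Rightarrow> real^'p"
  assumes sys: "loc_lip f" "loc_lip F" "loc_lip g" "f 0 = 0" "F 0 = 0"
    and tau_lip: "local_lipschitz {0..} UNIV (\<lambda>t a. \<tau> a t)"
    and tau_pw: "\<And>a. pw_continuous (\<tau> a)"
    and V_C1: "\<And>z. z \<in> UNIV \<times> {0..} \<Longrightarrow>
                 ((\<lambda>(a, t). V a t) has_derivative blinfun_apply (DV z)) (at z within UNIV \<times> {0..})"
    and DV_cont: "continuous_on (UNIV \<times> {0..}) DV"
    and V_nonneg: "\<And>a t. t \<ge> 0 \<Longrightarrow> V a t \<ge> 0"
    and eta: "\<eta>1 > 0" "\<eta>2 > 0" "\<eta>3 > 0" "T \<ge> 0"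
    and V_bounds: "\<And>a t. t \<ge> 0 \<Longrightarrow> \<eta>1 * (norm a)\<^sup>2 \<le> V a t \<and> V a t \<le> \<eta>2 * (norm a)\<^sup>2"
    and Vdot_nonpos: "\<And>a t. t \<ge> 0 \<Longrightarrow> blinfun_apply (DV (a, t)) (- \<tau> (\<theta> - a) t, 1) \<le> 0"
    and Vdot_neg: "\<And>a t. t \<ge> T \<Longrightarrow>
                     blinfun_apply (DV (a, t)) (- \<tau> (\<theta> - a) t, 1) \<le> - \<eta>3 * (norm a)\<^sup>2"
    and domain: "open D" "connected D" "D \<noteq> {}"
    and reldeg_u: "rel_deg f g h r D"
    and reldeg_theta: "rel_deg f F h r D"
    and alpha_smooth: "\<And>i. i \<in> {1..r} \<Longrightarrow> smooth_real (\<alpha> i)"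
    and psi_diff: "\<And>i x. i < r \<Longrightarrow> psi f \<alpha> h i differentiable (at x)"
    and cbf: "ISSf_HOCBF f F g h r \<alpha> \<epsilon>"
    and k_lip: "loc_lip (\<lambda>(x, a). k x a)"
    and k_in: "\<And>x a. k x a \<in> K_h f F g h r \<alpha> \<epsilon> x a"
    and update: "\<And>t. t \<ge> 0 \<Longrightarrow> ((\<lambda>s. \<tau> (\<theta>h s) s) has_integral (\<theta>h t - \<theta>h 0)) {0..t}"
    and delta: "\<delta> \<ge> 0" "\<And>t. t \<ge> 0 \<Longrightarrow> norm (\<theta> - \<theta>h t) \<le> \<delta>"
  shows "\<forall>(x :: real \<Rightarrow> real^'n) (J :: real set).
           is_interval J \<and> 0 \<in> J \<and> J \<subseteq> {0..}
           \<and> (\<forall>t\<in>J. (x has_vector_derivative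
                  (f (x t) + F (x t) *v \<theta>h t + g (x t) *v k (x t) (\<theta>h t) + F (x t) *v (\<theta> - \<theta>h t)))
                  (at t within J))
           \<and> x 0 \<in> C_delta f \<alpha> h \<epsilon> r \<delta>
           \<longrightarrow> (\<forall>t\<in>J. x t \<in> C_delta f \<alpha> h \<epsilon> r \<delta>)"
proof (intro allI impI, elim conjE)
  fix x :: "real \<Rightarrow> real^'n" and J :: "real set"
  assume J: "is_interval J" "0 \<in> J" "J \<subseteq> {0..}"
    and closed_loop: "\<forall>t\<in>J. (x has_vector_derivative
                  (f (x t) + F (x t) *v \<theta>h t + g (x t) *v k (x t) (\<theta>h t) + F (x t) *v (\<theta> - \<theta>h t)))
                  (at t within J)"
    and x0: "x 0 \<in> C_delta f \<alpha> h \<epsilon> r \<delta>"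
  have "1 \<le> r" using reldeg_u by (simp add: rel_deg_def)
  have Kinf: "\<And>i. i \<in> {1..r} \<Longrightarrow> Kinf_e (\<alpha> i)" and "\<epsilon> > 0"
    using cbf by (auto simp: ISSf_HOCBF_def)
  define b' where "b' i t = Lie f (psi f \<alpha> h i) (x t) + LieV F (psi f \<alpha> h i) (x t) \<bullet> \<theta>h t
    + LieV g (psi f \<alpha> h i) (x t) \<bullet> k (x t) (\<theta>h t) + LieV F (psi f \<alpha> h i) (x t) \<bullet> (\<theta> - \<theta>h t)"
    for i t
  have bound: "psi f \<alpha> h i (x t) \<ge> - gamma \<alpha> \<epsilon> r \<delta> (Suc i)" if "i < r" "t \<in> J" for i t
  proof (rule HOCBF_cascade_ge[where b = "\<lambda>i t. psi f \<alpha> h i (x t)" and b' = b'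
        and a = "\<lambda>i. \<alpha> (Suc i)" and c = "\<lambda>i. gamma \<alpha> \<epsilon> r \<delta> (Suc i)",
        OF J _ _ _ _ _ _ that])
    show "mono (\<alpha> (Suc i))" if "i < r" for i
      using Kinf[of "Suc i"] that by (simp add: Kinf_e_def strict_mono_mono)
    show "((\<lambda>t. psi f \<alpha> h i (x t)) has_real_derivative b' i t) (at t within J)"
      if "i < r" "t \<in> J" for i t
      unfolding b'_def using closed_loop psi_diff that by (blast intro: has_real_derivative_along_closed_loop)
    show "b' i t + \<alpha> (Suc i) (psi f \<alpha> h i (x t)) = psi f \<alpha> h (Suc i) (x t)" if "Suc i < r" for i t
      using that LieV_psi_eq_0[OF reldeg_u alpha_smooth] LieV_psi_eq_0[OF reldeg_theta alpha_smooth]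
      by (simp add: b'_def)
    show "\<alpha> (Suc i) (- gamma \<alpha> \<epsilon> r \<delta> (Suc i)) = - gamma \<alpha> \<epsilon> r \<delta> (Suc (Suc i))" if "Suc i < r" for i
      using Kinf[of "Suc i"] that by (simp add: alpha_neg_gamma)
    show "b' (r - 1) t + \<alpha> (Suc (r - 1)) (psi f \<alpha> h (r - 1) (x t))
        \<ge> \<alpha> (Suc (r - 1)) (- gamma \<alpha> \<epsilon> r \<delta> (Suc (r - 1)))" if "t \<in> J" for t
    proof -
      have "\<alpha> r (- gamma \<alpha> \<epsilon> r \<delta> r) = - (\<epsilon> * \<delta>\<^sup>2 / 4)"
        using Kinf[of r] \<open>1 \<le> r\<close> by (simp add: alpha_neg_gamma_top)
      moreover have "norm (\<theta> - \<theta>h t) \<le> \<delta>" using delta(2) that J(3) by auto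
      ultimately show ?thesis
        using K_h_robust[OF k_in \<open>\<epsilon> > 0\<close>] \<open>1 \<le> r\<close> by (simp add: b'_def)
    qed
    show "psi f \<alpha> h i (x 0) \<ge> - gamma \<alpha> \<epsilon> r \<delta> (Suc i)" if "i < r" for i
      using x0 that unfolding C_delta_def by (auto dest!: bspec[where x = "Suc i"])
  qed
  show "\<forall>t\<in>J. x t \<in> C_delta f \<alpha> h \<epsilon> r \<delta>"
    unfolding C_delta_def
  proof (intro ballI INT_I CollectI)
    fix t i assume "t \<in> J" "i \<in> {1..r}"
    moreover have "i - 1 < r" and "Suc (i - 1) = i" using \<open>i \<in> {1..r}\<close> by auto
    ultimately have "psi f \<alpha> h (i - 1) (x t) \<ge> - gamma \<alpha> \<epsilon> r \<delta> i"
      using bound[of "i - 1" t] by simp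
    then show "psi f \<alpha> h (i - 1) (x t) + gamma \<alpha> \<epsilon> r \<delta> i \<ge> 0" by simp
  qed
qed

end
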